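(* Let $F$ be a minimally unsatisfiable clause-set and $v$ a singular variable for $F$ with singular literal $x$, main clause $C$ and side clauses $D_1,\dots,D_m$. Let $F'$ be obtained from $F$ by replacing each $D_i$ by $D_i \cup (C\setminus\{x\})$ ($i=1,\dots,m$). Then each $D_i\cup(C\setminus\{x\})$ is a clause (contains no complementary pair), and $F'$ is a partial saturation of $F$.
   Context: Literals are variables $v$ and complements $\overline{v}$; a clause is a finite set of literals with no complementary pair; a clause-set is a finite set of clauses; $\mathrm{var}(F)$ is the set of variables of $F$; $\mathrm{ldeg}_F(x)$ is the number of clauses of $F$ containing literal $x$. $\mathrm{MU}$ is the set of minimally unsatisfiable clause-sets. A variable $v$ is singular for $F$ if $\min(\mathrm{ldeg}_F(v),\mathrm{ldeg}_F(\overline{v}))=1$; a singular literal for $v$ is a literal $x$ with $\mathrm{var}(x)=v$ and $\mathrm{ldeg}_F(x)=1$ (if both polarities qualify, one is chosen); the main clause is the unique $C\in F$ with $x\in C$, and the side clauses are the clauses $D\in F$ with $\overline{x}\in D$. A partial saturation of $F\in\mathrm{MU}$ is a clause-set $F'\in\mathrm{MU}$ with $\mathrm{var}(F')=\mathrm{var}(F)$ such that there is a bijection $\alpha:F\to F'$ with $C\subseteq\alpha(C)$ for all $C\in F$. *)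

theory Defs
  imports Main
begin

datatype 'v lit = Pos 'v | Neg 'v

fun var_lit :: "'v lit \<Rightarrow> 'v" where
  "var_lit (Pos v) = v" | "var_lit (Neg v) = v"

fun comp :: "'v lit \<Rightarrow> 'v lit" where
  "comp (Pos v) = Neg v" | "comp (Neg v) = Pos v"

type_synonym 'v clause = "'v lit set"

definition is_clause :: "'v clause \<Rightarrow> bool" where
  "is_clause C \<longleftrightarrow> finite C \<and> (\<forall>y\<in>C. comp y \<notin> C)"

definition is_clause_set :: "'v clause set \<Rightarrow> bool" where
  "is_clause_set F \<longleftrightarrow> finite F \<and> (\<forall>C\<in>F. is_clause C)"

definition vars :: "'v clause set \<Rightarrow> 'v set" where
  "vars F = (\<Union>C\<in>F. var_lit ` C)"

definition ldeg :: "'v clause set \<Rightarrow> 'v lit \<Rightarrow> nat" where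
  "ldeg F y = card {C\<in>F. y \<in> C}"

fun lit_true :: "('v \<Rightarrow> bool) \<Rightarrow> 'v lit \<Rightarrow> bool" where
  "lit_true \<phi> (Pos v) = \<phi> v" | "lit_true \<phi> (Neg v) = (\<not> \<phi> v)"

definition satisfiable :: "'v clause set \<Rightarrow> bool" where
  "satisfiable F \<longleftrightarrow> (\<exists>\<phi>. \<forall>C\<in>F. \<exists>y\<in>C. lit_true \<phi> y)"

definition MU :: "'v clause set set" where
  "MU = {F. is_clause_set F \<and> \<not> satisfiable F \<and> (\<forall>G. G \<subset> F \<longrightarrow> satisfiable G)}"

definition singular_var :: "'v clause set \<Rightarrow> 'v \<Rightarrow> bool" where
  "singular_var F v \<longleftrightarrow> min (ldeg F (Pos v)) (ldeg F (Neg v)) = 1"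

definition singular_lit :: "'v clause set \<Rightarrow> 'v lit \<Rightarrow> bool" where
  "singular_lit F x \<longleftrightarrow> singular_var F (var_lit x) \<and> ldeg F x = 1"

definition partial_saturation :: "'v clause set \<Rightarrow> 'v clause set \<Rightarrow> bool" where
  "partial_saturation F F' \<longleftrightarrow> F' \<in> MU \<and> vars F' = vars F \<and>
     (\<exists>\<alpha>. bij_betw \<alpha> F F' \<and> (\<forall>C\<in>F. C \<subseteq> \<alpha> C))"

end

theory Submission
  imports Defs
begin

text \<open>
  Every side clause \<open>D\<close> of \<open>F \<in> MU\<close> has an assignment satisfying \<open>F - {D}\<close> and falsifying
  \<open>D\<close>. It also falsifies \<open>C - {x}\<close>: otherwise flipping the variable of \<open>x\<close> so that \<open>x\<close> becomes
  false would satisfy all side clauses, keep \<open>C\<close> true, and leave the other clauses untouched,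
  contradicting unsatisfiability of \<open>F\<close>. So each enlarged clause \<open>D \<union> (C - {x})\<close> is falsified by
  an assignment satisfying all other clauses; this makes it a clause and makes the enlargement
  injective and minimally unsatisfiable. Unsatisfiability of the enlarged set is the same
  flipping argument: an assignment satisfying it either satisfies \<open>C - {x}\<close> or already satisfies
  every original clause.
\<close>

definition clause_true :: "('v \<Rightarrow> bool) \<Rightarrow> 'v clause \<Rightarrow> bool" where
  "clause_true \<phi> E \<longleftrightarrow> (\<exists>y\<in>E. lit_true \<phi> y)"

lemma satisfiable_iff_clause_true: "satisfiable F \<longleftrightarrow> (\<exists>\<phi>. \<forall>E\<in>F. clause_true \<phi> E)"
  by (simp add: satisfiable_def clause_true_def)

lemma clause_true_mono: "clause_true \<phi> D \<Longrightarrow> D \<subseteq> E \<Longrightarrow> clause_true \<phi> E"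
  by (auto simp: clause_true_def)

lemma lit_true_comp [simp]: "lit_true \<phi> (comp y) \<longleftrightarrow> \<not> lit_true \<phi> y"
  by (cases y) auto

lemma var_lit_eq_iff: "var_lit y = var_lit x \<longleftrightarrow> y = x \<or> y = comp x"
  by (cases y; cases x) auto

definition force_lit :: "('v \<Rightarrow> bool) \<Rightarrow> 'v lit \<Rightarrow> 'v \<Rightarrow> bool" where
  "force_lit \<phi> x = \<phi>(var_lit x := (case x of Pos _ \<Rightarrow> True | Neg _ \<Rightarrow> False))"

lemma lit_true_force_lit_self: "lit_true (force_lit \<phi> x) x"
  by (cases x) (auto simp: force_lit_def)

lemma lit_true_force_lit_other:
  "var_lit y \<noteq> var_lit x \<Longrightarrow> lit_true (force_lit \<phi> x) y \<longleftrightarrow> lit_true \<phi> y"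
  by (cases y) (auto simp: force_lit_def)

lemma is_clause_if_falsified: "finite E \<Longrightarrow> \<not> clause_true \<phi> E \<Longrightarrow> is_clause E"
  unfolding is_clause_def clause_true_def by (metis lit_true_comp)

lemma MU_falsifier:
  assumes "F \<in> MU" and "D \<in> F"
  obtains \<phi> where "\<forall>E\<in>F - {D}. clause_true \<phi> E" and "\<not> clause_true \<phi> D"
proof -
  from assms have "satisfiable (F - {D})" and "\<not> satisfiable F"
    by (auto simp: MU_def)
  then obtain \<phi> where sat: "\<forall>E\<in>F - {D}. clause_true \<phi> E"
    by (auto simp: satisfiable_iff_clause_true)
  with \<open>\<not> satisfiable F\<close> have "\<not> clause_true \<phi> D"
    by (auto simp: satisfiable_iff_clause_true)
  with sat show thesis by (rule that)
qed

lemma satisfiable_if_rest_of_main_clause_true: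
  assumes C: "is_clause C" "x \<in> C"
    and main_unique: "\<And>E. E \<in> F \<Longrightarrow> x \<in> E \<Longrightarrow> E = C"
    and non_side: "\<forall>E\<in>F. comp x \<notin> E \<longrightarrow> clause_true \<phi> E"
    and rest: "clause_true \<phi> (C - {x})"
  shows "satisfiable F"
proof -
  let ?\<psi> = "force_lit \<phi> (comp x)"
  have unchanged: "lit_true ?\<psi> y \<longleftrightarrow> lit_true \<phi> y" if "y \<noteq> x" "y \<noteq> comp x" for y
    using that lit_true_force_lit_other[of y "comp x" \<phi>] var_lit_eq_iff[of y x]
    by (cases x) auto
  have "clause_true ?\<psi> E" if E: "E \<in> F" for E
  proof (cases "comp x \<in> E")
    case True
    then show ?thesis using lit_true_force_lit_self by (auto simp: clause_true_def)
  next
    case False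
    have "comp x \<notin> C" using C by (auto simp: is_clause_def)
    from E False non_side obtain y where "y \<in> E" "lit_true \<phi> y" "y \<noteq> comp x"
      by (auto simp: clause_true_def)
    moreover from rest \<open>comp x \<notin> C\<close> obtain z where "z \<in> C" "lit_true \<phi> z" "z \<noteq> x" "z \<noteq> comp x"
      by (auto simp: clause_true_def)
    ultimately show ?thesis
      using main_unique[OF E] unchanged by (cases "y = x") (auto simp: clause_true_def)
  qed
  then show ?thesis by (auto simp: satisfiable_iff_clause_true)
qed

lemma inj_on_if_falsifiers:
  assumes "\<forall>D\<in>F. D \<subseteq> \<alpha> D"
    and "\<forall>D\<in>F. \<exists>\<phi>. (\<forall>E\<in>F - {D}. clause_true \<phi> E) \<and> \<not> clause_true \<phi> (\<alpha> D)"
  shows "inj_on \<alpha> F"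
proof (rule inj_onI, rule ccontr)
  fix D D' assume "D \<in> F" "D' \<in> F" "\<alpha> D = \<alpha> D'" "D \<noteq> D'"
  with assms obtain \<phi> where "clause_true \<phi> D'" "\<not> clause_true \<phi> (\<alpha> D)"
    by blast
  with \<open>\<alpha> D = \<alpha> D'\<close> \<open>D' \<in> F\<close> assms(1) show False
    by (metis clause_true_mono)
qed

lemma image_in_MU_if_falsifiers:
  assumes "finite F" and "\<forall>D\<in>F. finite (\<alpha> D)" and "\<not> satisfiable (\<alpha> ` F)"
    and sub: "\<forall>D\<in>F. D \<subseteq> \<alpha> D"
    and falsifiers: "\<forall>D\<in>F. \<exists>\<phi>. (\<forall>E\<in>F - {D}. clause_true \<phi> E) \<and> \<not> clause_true \<phi> (\<alpha> D)"
  shows "\<alpha> ` F \<in> MU"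
proof -
  have "is_clause (\<alpha> D)" if "D \<in> F" for D
    using that assms(2) falsifiers is_clause_if_falsified by blast
  then have "is_clause_set (\<alpha> ` F)"
    using assms(1) by (auto simp: is_clause_set_def)
  moreover have "satisfiable G" if "G \<subset> \<alpha> ` F" for G
  proof -
    from that obtain D where D: "D \<in> F" "\<alpha> D \<notin> G" by blast
    with falsifiers obtain \<phi> where \<phi>: "\<forall>E\<in>F - {D}. clause_true \<phi> E" by blast
    have "clause_true \<phi> E'" if "E' \<in> G" for E'
    proof -
      from \<open>E' \<in> G\<close> \<open>G \<subset> \<alpha> ` F\<close> obtain E where "E \<in> F" "E' = \<alpha> E" by blast
      with D \<open>E' \<in> G\<close> \<phi> sub show ?thesis by (metis DiffI singletonD clause_true_mono)
    qed
    then show ?thesis by (auto simp: satisfiable_iff_clause_true)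
  qed
  ultimately show ?thesis using assms(3) by (auto simp: MU_def)
qed

definition absorb_main :: "'v lit \<Rightarrow> 'v clause \<Rightarrow> 'v clause \<Rightarrow> 'v clause" where
  "absorb_main x C D = (if comp x \<in> D then D \<union> (C - {x}) else D)"

lemma subset_absorb_main: "D \<subseteq> absorb_main x C D"
  by (simp add: absorb_main_def)

lemma absorb_main_image:
  "(F - {D\<in>F. comp x \<in> D}) \<union> (\<lambda>D. D \<union> (C - {x})) ` {D\<in>F. comp x \<in> D} = absorb_main x C ` F"
  by (auto simp: absorb_main_def image_iff)

lemma main_clause_unique:
  assumes "ldeg F x = 1" "C \<in> F" "x \<in> C" "E \<in> F" "x \<in> E"
  shows "E = C"
proof -
  have "card {E\<in>F. x \<in> E} = 1"
    using assms(1) by (simp add: ldeg_def)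
  then obtain C0 where C0: "{E\<in>F. x \<in> E} = {C0}"
    by (rule card_1_singletonE)
  have "C \<in> {E\<in>F. x \<in> E}" "E \<in> {E\<in>F. x \<in> E}"
    using assms(2-5) by simp_all
  then show ?thesis
    unfolding C0 by simp
qed

locale main_clause_of_MU =
  fixes F :: "'v clause set" and x :: "'v lit" and C :: "'v clause"
  assumes MU: "F \<in> MU"
    and main: "C \<in> F" "x \<in> C"
    and main_unique: "\<And>E. E \<in> F \<Longrightarrow> x \<in> E \<Longrightarrow> E = C"
begin

lemma unsat: "\<not> satisfiable F"
  using MU by (simp add: MU_def)

lemma clause: "E \<in> F \<Longrightarrow> is_clause E"
  using MU by (simp add: MU_def is_clause_set_def)

lemma satisfiable_if_rest_true:
  "\<forall>E\<in>F. comp x \<notin> E \<longrightarrow> clause_true \<phi> E \<Longrightarrow> clause_true \<phi> (C - {x}) \<Longrightarrow> satisfiable F"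
  using satisfiable_if_rest_of_main_clause_true[OF clause[OF main(1)] main(2) main_unique] .

lemma absorb_main_falsifier:
  assumes "D \<in> F"
  shows "\<exists>\<phi>. (\<forall>E\<in>F - {D}. clause_true \<phi> E) \<and> \<not> clause_true \<phi> (absorb_main x C D)"
proof -
  obtain \<phi> where \<phi>: "\<forall>E\<in>F - {D}. clause_true \<phi> E" and "\<not> clause_true \<phi> D"
    using MU_falsifier[OF MU assms] .
  moreover have "\<not> clause_true \<phi> (C - {x})" if "comp x \<in> D"
    using \<phi> that unsat satisfiable_if_rest_true[of \<phi>] by blast
  ultimately have "\<not> clause_true \<phi> (absorb_main x C D)"
    by (auto simp: absorb_main_def clause_true_def)
  with \<phi> show ?thesis by blast
qed

lemma absorb_main_unsat: "\<not> satisfiable (absorb_main x C ` F)"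
proof
  assume "satisfiable (absorb_main x C ` F)"
  then obtain \<phi> where \<phi>: "\<forall>D\<in>F. clause_true \<phi> (absorb_main x C D)"
    by (auto simp: satisfiable_iff_clause_true)
  show False
  proof (cases "clause_true \<phi> (C - {x})")
    case True
    have "\<forall>E\<in>F. comp x \<notin> E \<longrightarrow> clause_true \<phi> E"
      using \<phi> by (auto simp: absorb_main_def)
    with True unsat satisfiable_if_rest_true show False by blast
  next
    case False
    with \<phi> have "\<forall>D\<in>F. clause_true \<phi> D"
      by (auto simp: absorb_main_def clause_true_def split: if_splits)
    with unsat show False by (auto simp: satisfiable_iff_clause_true)
  qed
qed

lemma partial_saturation_absorb_main: "partial_saturation F (absorb_main x C ` F)"
proof -
  have fin: "finite F"
    using MU by (simp add: MU_def is_clause_set_def)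
  have fin_clauses: "\<forall>D\<in>F. finite (absorb_main x C D)"
    using clause clause[OF main(1)] by (simp add: is_clause_def absorb_main_def)
  have sub: "\<forall>D\<in>F. D \<subseteq> absorb_main x C D"
    by (simp add: subset_absorb_main)
  have "vars (absorb_main x C ` F) \<subseteq> vars F"
    using main(1) by (auto simp: vars_def absorb_main_def)
  moreover have "vars F \<subseteq> vars (absorb_main x C ` F)"
    using sub unfolding vars_def by blast
  moreover have "absorb_main x C ` F \<in> MU"
    using image_in_MU_if_falsifiers[OF fin fin_clauses absorb_main_unsat sub] absorb_main_falsifier by blast
  moreover have "bij_betw (absorb_main x C) F (absorb_main x C ` F)"
    using inj_on_if_falsifiers[OF sub] absorb_main_falsifier by (simp add: bij_betw_def)
  ultimately show ?thesis
    using sub unfolding partial_saturation_def by blast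
qed

end

theorem corollary11:
  fixes F :: "'v clause set" and x :: "'v lit" and C :: "'v clause"
  assumes "F \<in> MU"
    and "singular_lit F x"
    and "C \<in> F" and "x \<in> C"
  shows "(\<forall>D\<in>{D\<in>F. comp x \<in> D}. is_clause (D \<union> (C - {x})))
         \<and> partial_saturation F
             ((F - {D\<in>F. comp x \<in> D}) \<union> (\<lambda>D. D \<union> (C - {x})) ` {D\<in>F. comp x \<in> D})"
proof -
  have "ldeg F x = 1"
    using assms(2) by (simp add: singular_lit_def)
  then interpret main_clause_of_MU F x C
    using assms(1,3,4) main_clause_unique by unfold_locales blast+
  have "absorb_main x C ` F \<in> MU"
    using partial_saturation_absorb_main by (simp add: partial_saturation_def)
  then have "\<forall>D\<in>F. is_clause (absorb_main x C D)"
    by (simp add: MU_def is_clause_set_def)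
  then have "\<forall>D\<in>{D\<in>F. comp x \<in> D}. is_clause (D \<union> (C - {x}))"
    by (auto simp: absorb_main_def)
  with partial_saturation_absorb_main show ?thesis
    unfolding absorb_main_image by blast
qed

end
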